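(* For every $k\geq 0$, \[H_{k+1}(x)=G_k(x)\,(x+x^2+\cdots+x^{2k+4}).\]
   Context: $B_n(y)=\sum_{\pi\in B_n}y^{\mathrm{des}_B(\pi)}$ is the type $B$ Eulerian polynomial: $B_n$ is the set of signed permutations $\pi_1\cdots\pi_n$ of $[n]$, and with $\pi_0=0$, $\mathrm{des}_B(\pi)$ counts $i\in\{0,\dots,n-1\}$ with $\pi_i>\pi_{i+1}$; $B_0=1$. For $k\ge0$ define \[H_k(x)=\sum_{l=0}^{k}B_{k-l}(x^{2k+2})(x^{2k+2}-1)^l\sum_{s=l}^{k}\binom{s}{l}x^{2k+1-s}+\sum_{l=0}^{k}B_{k-l}(x^{-2k-2})(x^{-2k-2}-1)^l\sum_{s=l}^{k}\binom{s}{l}x^{2(k+1)^2+s}\] and \[G_k(x)=\frac{1}{x}\sum_{l=0}^{k}B_{k-l}(x^{2k+4})(x^{2k+4}-1)^l\sum_{s=l}^{k}\binom{s}{l}x^{2k+3-s}+\sum_{l=0}^{k}B_{k-l}(x^{-2k-4})(x^{-2k-4}-1)^l\sum_{s=l}^{k}\binom{s}{l}x^{2(k+1)(k+2)+s}.\] *)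

theory Defs
  imports Complex_Main
begin

text \<open>Signed permutations of [n], represented as functions pi :: nat => int with
  pi 0 = 0 (the convention pi_0 = 0), pi i = 0 outside {0..n}, and
  i |-> |pi i| a bijection of {1..n}.\<close>
definition signed_perms :: "nat \<Rightarrow> (nat \<Rightarrow> int) set" where
  "signed_perms n = {\<pi>. (\<forall>i. (i = 0 \<or> n < i) \<longrightarrow> \<pi> i = 0) \<and>
                         bij_betw (\<lambda>i. nat \<bar>\<pi> i\<bar>) {1..n} {1..n}}"

definition desB :: "nat \<Rightarrow> (nat \<Rightarrow> int) \<Rightarrow> nat" where
  "desB n \<pi> = card {i \<in> {0..<n}. \<pi> i > \<pi> (Suc i)}"

definition eulerB :: "nat \<Rightarrow> real \<Rightarrow> real" where
  "eulerB n y = (\<Sum>\<pi>\<in>signed_perms n. y ^ desB n \<pi>)"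

definition Hk :: "nat \<Rightarrow> real \<Rightarrow> real" where
  "Hk k x =
     (\<Sum>l=0..k. eulerB (k - l) (x ^ (2*k+2)) * (x ^ (2*k+2) - 1) ^ l *
        (\<Sum>s=l..k. of_nat (s choose l) * x ^ (2*k+1-s)))
   + (\<Sum>l=0..k. eulerB (k - l) (inverse (x ^ (2*k+2))) * (inverse (x ^ (2*k+2)) - 1) ^ l *
        (\<Sum>s=l..k. of_nat (s choose l) * x ^ (2*(k+1)^2 + s)))"

definition Gk :: "nat \<Rightarrow> real \<Rightarrow> real" where
  "Gk k x =
     (1 / x) * (\<Sum>l=0..k. eulerB (k - l) (x ^ (2*k+4)) * (x ^ (2*k+4) - 1) ^ l *
        (\<Sum>s=l..k. of_nat (s choose l) * x ^ (2*k+3-s)))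
   + (\<Sum>l=0..k. eulerB (k - l) (inverse (x ^ (2*k+4))) * (inverse (x ^ (2*k+4)) - 1) ^ l *
        (\<Sum>s=l..k. of_nat (s choose l) * x ^ (2*(k+1)*(k+2) + s)))"

end

theory Submission
  imports Defs "HOL-Computational_Algebra.Polynomial_FPS"
begin

text \<open>
  Inserting the letter \<open>\<plusminus>(n+1)\<close> into a signed permutation of \<open>[n]\<close> yields the recurrence
  \<open>b(n+1,j) = (2j+1) b(n,j) + (2n-2j+3) b(n,j-1)\<close> for the coefficients \<open>b(n,j)\<close> of \<open>B_n\<close>;
  hence \<open>B_n\<close> is palindromic and \<open>\<Sum>_i (2i+1)^n t^i = B_n(t) / (1-t)^(n+1)\<close>.

  Put \<open>E(n,s,q) = \<Sum>_l C(s,l) B_(n-l)(q) (q-1)^l\<close>. Exchanging the order of summation turns each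
  half of \<open>H_k\<close> and of \<open>G_k\<close> into a sum \<open>\<Sum>_s x^s E(k,s,q)\<close>, up to replacing \<open>x\<close> by \<open>1/x\<close>
  and \<open>q\<close> by \<open>1/q\<close>. As \<open>E(n+1,s+1,q) - E(n+1,s,q) = (q-1) E(n,s,q)\<close>, multiplying such a sum by
  \<open>1 - x\<close> telescopes it into the sum for \<open>n\<close> plus boundary terms in \<open>B_(n+1)(q)\<close> and \<open>E(n+1,n+1,q)\<close>.
  In \<open>(1-x) H_(k+1)(x)\<close> the boundary terms cancel in pairs because \<open>B_n\<close> and \<open>E(n,n,-)\<close> are
  palindromic, which leaves \<open>x (1 - x^(2k+4)) G_k(x)\<close>. Palindromicity of \<open>E(n,n,-)\<close>, \<open>n > 0\<close>,
  comes from the generating function: with \<open>q - 1\<close> replaced by \<open>\<plusminus>(1-t)\<close> the sum becomes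
  \<open>(1-t)^(n+1) \<Sum>_i (2i+1 \<plusminus> 1)^n t^i\<close>, and the two series differ by the factor \<open>t\<close>.
\<close>

lemma signed_perms_at_0: "\<pi> \<in> signed_perms n \<Longrightarrow> \<pi> 0 = 0"
  by (simp add: signed_perms_def)

lemma signed_perms_beyond: "\<pi> \<in> signed_perms n \<Longrightarrow> n < i \<Longrightarrow> \<pi> i = 0"
  by (simp add: signed_perms_def)

lemma signed_perms_bij: "\<pi> \<in> signed_perms n \<Longrightarrow> bij_betw (\<lambda>i. nat \<bar>\<pi> i\<bar>) {1..n} {1..n}"
  by (simp add: signed_perms_def)

lemma signed_perms_abs_in_range:
  "\<pi> \<in> signed_perms n \<Longrightarrow> i \<in> {1..n} \<Longrightarrow> nat \<bar>\<pi> i\<bar> \<in> {1..n}"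
  using bij_betw_apply[OF signed_perms_bij] by blast

lemma signed_perms_abs_inj:
  "\<pi> \<in> signed_perms n \<Longrightarrow> i \<in> {1..n} \<Longrightarrow> j \<in> {1..n} \<Longrightarrow> \<bar>\<pi> i\<bar> = \<bar>\<pi> j\<bar> \<Longrightarrow> i = j"
  using inj_onD[OF bij_betw_imp_inj_on[OF signed_perms_bij]] by metis

lemma signed_perms_abs_le: "\<pi> \<in> signed_perms n \<Longrightarrow> \<bar>\<pi> i\<bar> \<le> int n"
  using signed_perms_abs_in_range[of \<pi> n i] signed_perms_at_0[of \<pi> n]
    signed_perms_beyond[of \<pi> n i]
  by (cases "i \<in> {1..n}") (auto simp: not_le)

lemma signed_permsI:
  assumes "\<pi> 0 = 0" "\<And>i. n < i \<Longrightarrow> \<pi> i = 0"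
    and range: "\<And>i. i \<in> {1..n} \<Longrightarrow> nat \<bar>\<pi> i\<bar> \<in> {1..n}"
    and inj: "\<And>i j. i \<in> {1..n} \<Longrightarrow> j \<in> {1..n} \<Longrightarrow> \<bar>\<pi> i\<bar> = \<bar>\<pi> j\<bar> \<Longrightarrow> i = j"
  shows "\<pi> \<in> signed_perms n"
proof -
  have "inj_on (\<lambda>i. nat \<bar>\<pi> i\<bar>) {1..n}"
    using inj by (intro inj_onI) (simp add: eq_nat_nat_iff)
  moreover from this have "(\<lambda>i. nat \<bar>\<pi> i\<bar>) ` {1..n} = {1..n}"
    using range by (intro endo_inj_surj) auto
  ultimately show ?thesis
    using assms(1,2) by (auto simp: signed_perms_def bij_betw_def)
qed

lemma signed_perms_0: "signed_perms 0 = {\<lambda>_. 0}"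
proof -
  have "\<pi> = (\<lambda>_. 0)" if "\<pi> \<in> signed_perms 0" for \<pi>
  proof
    fix i show "\<pi> i = 0"
      using signed_perms_at_0[OF that] signed_perms_beyond[OF that, of i] by (cases i) auto
  qed
  then show ?thesis by (auto simp: signed_perms_def bij_betw_def)
qed

definition insert_max :: "nat \<Rightarrow> (nat \<Rightarrow> int) \<Rightarrow> nat \<Rightarrow> int \<Rightarrow> nat \<Rightarrow> int" where
  "insert_max n \<sigma> p e =
     (\<lambda>i. if i \<le> p then \<sigma> i else if i = Suc p then e * int (Suc n) else \<sigma> (i - 1))"

definition delete_at :: "nat \<Rightarrow> (nat \<Rightarrow> int) \<Rightarrow> nat \<Rightarrow> int" where
  "delete_at p \<pi> = (\<lambda>i. if i \<le> p then \<pi> i else \<pi> (Suc i))"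

lemma delete_at_insert_max: "delete_at p (insert_max n \<sigma> p e) = \<sigma>"
  by (rule ext) (simp add: delete_at_def insert_max_def)

lemma insert_max_at: "insert_max n \<sigma> p e (Suc p) = e * int (Suc n)"
  by (simp add: insert_max_def)

lemma insert_max_in_signed_perms:
  assumes \<sigma>: "\<sigma> \<in> signed_perms n" and p: "p \<le> n" and e: "e \<in> {1, -1}"
  shows "insert_max n \<sigma> p e \<in> signed_perms (Suc n)"
proof (rule signed_permsI)
  let ?old = "\<lambda>i. if i \<le> p then i else i - 1"
  have abs_eq: "\<bar>insert_max n \<sigma> p e i\<bar> = (if i = Suc p then int (Suc n) else \<bar>\<sigma> (?old i)\<bar>)" for i
    using e by (auto simp: insert_max_def)
  have old: "?old i \<in> {1..n}" if "i \<in> {1..Suc n}" "i \<noteq> Suc p" for i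
    using that p by auto
  show "insert_max n \<sigma> p e 0 = 0"
    using signed_perms_at_0[OF \<sigma>] by (simp add: insert_max_def)
  show "insert_max n \<sigma> p e i = 0" if "Suc n < i" for i
    using that p signed_perms_beyond[OF \<sigma>, of "i - 1"] by (simp add: insert_max_def)
  show "nat \<bar>insert_max n \<sigma> p e i\<bar> \<in> {1..Suc n}" if "i \<in> {1..Suc n}" for i
    using signed_perms_abs_in_range[OF \<sigma> old[OF that]] by (cases "i = Suc p") (auto simp: abs_eq)
  show "i = j" if i: "i \<in> {1..Suc n}" and j: "j \<in> {1..Suc n}"
    and eq: "\<bar>insert_max n \<sigma> p e i\<bar> = \<bar>insert_max n \<sigma> p e j\<bar>" for i j
  proof (cases "i = Suc p \<or> j = Suc p")
    case True
    then show ?thesis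
      using eq signed_perms_abs_le[OF \<sigma>, of "?old i"] signed_perms_abs_le[OF \<sigma>, of "?old j"]
      by (auto simp: abs_eq split: if_splits)
  next
    case False
    then have "?old i = ?old j"
      using eq signed_perms_abs_inj[OF \<sigma> old[OF i] old[OF j]] by (simp add: abs_eq)
    then show ?thesis using False i j by (simp split: if_splits)
  qed
qed

lemma insert_max_inj:
  assumes \<sigma>': "\<sigma>' \<in> signed_perms n" and e: "e \<in> {1, -1}"
    and eq: "insert_max n \<sigma> p e = insert_max n \<sigma>' p' e'"
  shows "\<sigma> = \<sigma>' \<and> p = p' \<and> e = e'"
proof -
  have "p = p'"
  proof (rule ccontr)
    assume "p \<noteq> p'"
    then have "\<bar>insert_max n \<sigma>' p' e' (Suc p)\<bar> \<le> int n"
      using signed_perms_abs_le[OF \<sigma>'] by (simp add: insert_max_def)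
    moreover have "\<bar>insert_max n \<sigma> p e (Suc p)\<bar> = int (Suc n)"
      using e by (auto simp: insert_max_at)
    ultimately show False using eq by simp
  qed
  moreover from this have "e = e'"
    using arg_cong[OF eq, of "\<lambda>f. f (Suc p)"] by (simp add: insert_max_at)
  moreover from \<open>p = p'\<close> have "\<sigma> = \<sigma>'"
    using arg_cong[OF eq, of "delete_at p"] by (simp add: delete_at_insert_max)
  ultimately show ?thesis by simp
qed

lemma signed_perms_Suc_insert_max:
  assumes \<pi>: "\<pi> \<in> signed_perms (Suc n)"
  obtains \<sigma> p e where "\<sigma> \<in> signed_perms n" "p \<le> n" "e \<in> {1, -1}" "\<pi> = insert_max n \<sigma> p e"
proof -
  have "Suc n \<in> (\<lambda>i. nat \<bar>\<pi> i\<bar>) ` {1..Suc n}"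
    using signed_perms_bij[OF \<pi>] by (simp add: bij_betw_def)
  then obtain i where "i \<in> {1..Suc n}" "nat \<bar>\<pi> i\<bar> = Suc n"
    by auto
  then obtain p where j: "Suc p \<in> {1..Suc n}" and max: "\<bar>\<pi> (Suc p)\<bar> = int (Suc n)"
    by (cases i) auto
  define e :: int where "e = (if \<pi> (Suc p) > 0 then 1 else -1)"
  define \<sigma> where "\<sigma> = delete_at p \<pi>"
  let ?new = "\<lambda>i. if i \<le> p then i else Suc i"
  have \<sigma>_eq: "\<sigma> i = \<pi> (?new i)" for i
    by (simp add: \<sigma>_def delete_at_def)
  have new: "?new i \<in> {1..Suc n} \<and> ?new i \<noteq> Suc p" if "i \<in> {1..n}" for i
    using that by auto
  have "\<pi> (Suc p) = e * int (Suc n)"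
    using max unfolding e_def by (cases "\<pi> (Suc p) < 0") auto
  then have "\<pi> = insert_max n \<sigma> p e"
    by (intro ext) (auto simp: insert_max_def \<sigma>_def delete_at_def)
  moreover have "\<sigma> \<in> signed_perms n"
  proof (rule signed_permsI)
    show "\<sigma> 0 = 0" using signed_perms_at_0[OF \<pi>] by (simp add: \<sigma>_eq)
    show "\<sigma> i = 0" if "n < i" for i
      using that j signed_perms_beyond[OF \<pi>, of "Suc i"] by (simp add: \<sigma>_eq)
    show "nat \<bar>\<sigma> i\<bar> \<in> {1..n}" if i: "i \<in> {1..n}" for i
    proof -
      have "\<bar>\<pi> (?new i)\<bar> \<noteq> int (Suc n)"
        using signed_perms_abs_inj[OF \<pi> conjunct1[OF new[OF i]] j] new[OF i] max by auto
      then show ?thesis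
        using signed_perms_abs_in_range[OF \<pi>, of "?new i"] new[OF i] by (auto simp: \<sigma>_eq)
    qed
    show "i = i'" if "i \<in> {1..n}" "i' \<in> {1..n}" "\<bar>\<sigma> i\<bar> = \<bar>\<sigma> i'\<bar>" for i i'
      using signed_perms_abs_inj[OF \<pi>, of "?new i" "?new i'"] new that
      by (auto simp: \<sigma>_eq split: if_splits)
  qed
  moreover have "p \<le> n" "e \<in> {1, -1}" using j by (auto simp: e_def)
  ultimately show ?thesis using that by blast
qed

lemma bij_betw_insert_max:
  "bij_betw (\<lambda>(\<sigma>, p, e). insert_max n \<sigma> p e)
     (signed_perms n \<times> {..n} \<times> {1, -1}) (signed_perms (Suc n))"
  (is "bij_betw ?f ?A _")
proof (rule bij_betw_imageI)
  show "inj_on ?f ?A"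
  proof (rule inj_onI)
    fix a b assume "a \<in> ?A" "b \<in> ?A" "?f a = ?f b"
    moreover obtain \<sigma> p e \<sigma>' p' e' where "a = (\<sigma>, p, e)" "b = (\<sigma>', p', e')"
      by (cases a, cases b) auto
    ultimately show "a = b"
      using insert_max_inj[of \<sigma>' n e \<sigma> p p' e'] by simp
  qed
  show "?f ` ?A = signed_perms (Suc n)"
  proof (intro equalityI subsetI)
    fix \<pi> assume "\<pi> \<in> signed_perms (Suc n)"
    then obtain \<sigma> p e where "\<sigma> \<in> signed_perms n" "p \<le> n" "e \<in> {1, -1}" "\<pi> = insert_max n \<sigma> p e"
      by (rule signed_perms_Suc_insert_max)
    then show "\<pi> \<in> ?f ` ?A" by (intro image_eqI[of _ _ "(\<sigma>, p, e)"]) auto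
  qed (auto intro: insert_max_in_signed_perms)
qed

lemma desB_eq_sum: "desB n \<pi> = (\<Sum>i<n. of_bool (\<pi> (Suc i) < \<pi> i))"
  unfolding desB_def atLeast0LessThan
  by (simp add: sum.If_cases Int_def conj_commute)

lemma desB_le: "desB n \<pi> \<le> n"
proof -
  have "{i \<in> {0..<n}. \<pi> (Suc i) < \<pi> i} \<subseteq> {0..<n}" by blast
  from card_mono[OF _ this] show ?thesis by (simp add: desB_def)
qed

lemma sum_lessThan_split:
  fixes g :: "nat \<Rightarrow> 'a::comm_monoid_add"
  assumes "p \<le> m"
  shows "(\<Sum>i<m. g i) = (\<Sum>i<p. g i) + (\<Sum>i<m - p. g (p + i))"
proof -
  obtain q where "m = p + q" using assms le_Suc_ex by blast
  then show ?thesis by (induction q arbitrary: m) (simp_all add: add.assoc)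
qed

lemma desB_insert_max:
  assumes \<sigma>: "\<sigma> \<in> signed_perms n" and p: "p \<le> n" and e: "e \<in> {1, -1}"
  shows "desB (Suc n) (insert_max n \<sigma> p e) =
    (if p < n then desB n \<sigma> + 1 - of_bool (\<sigma> (Suc p) < \<sigma> p) else desB n \<sigma> + of_bool (e = -1))"
proof -
  let ?\<pi> = "insert_max n \<sigma> p e"
  let ?d = "\<lambda>\<pi> i. of_bool (\<pi> (Suc i) < \<pi> i) :: nat"
  have below: "(\<Sum>i<p. ?d ?\<pi> i) = (\<Sum>i<p. ?d \<sigma> i)"
    by (rule sum.cong) (auto simp: insert_max_def)
  have at_p: "?d ?\<pi> p = of_bool (e = -1)"
    using e signed_perms_abs_le[OF \<sigma>, of p] by (auto simp: insert_max_def)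
  have "desB (Suc n) ?\<pi> = (\<Sum>i<p. ?d ?\<pi> i) + (\<Sum>i<Suc (n - p). ?d ?\<pi> (p + i))"
    using sum_lessThan_split[of p "Suc n" "?d ?\<pi>"] p by (simp only: desB_eq_sum Suc_diff_le)
  also have "\<dots> = (\<Sum>i<p. ?d \<sigma> i) + of_bool (e = -1) + (\<Sum>i<n - p. ?d ?\<pi> (Suc (p + i)))"
    by (simp only: sum.lessThan_Suc_shift below at_p add_0_right add_Suc_right add.assoc)
  finally have new: "desB (Suc n) ?\<pi>
      = (\<Sum>i<p. ?d \<sigma> i) + of_bool (e = -1) + (\<Sum>i<n - p. ?d ?\<pi> (Suc (p + i)))" .
  have old: "desB n \<sigma> = (\<Sum>i<p. ?d \<sigma> i) + (\<Sum>i<n - p. ?d \<sigma> (p + i))"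
    using sum_lessThan_split[of p n "?d \<sigma>"] p by (simp add: desB_eq_sum del: sum_of_bool_eq)
  show ?thesis
  proof (cases "p < n")
    case True
    then obtain m where m: "n - p = Suc m" by (metis Suc_diff_Suc)
    have after_p: "?d ?\<pi> (Suc p) = of_bool (e = 1)"
      using e signed_perms_abs_le[OF \<sigma>, of "Suc p"] by (auto simp: insert_max_def)
    have "(\<Sum>i<m. ?d ?\<pi> (Suc (p + Suc i))) = (\<Sum>i<m. ?d \<sigma> (p + Suc i))"
      by (rule sum.cong) (auto simp: insert_max_def)
    moreover have "of_bool (e = -1) + of_bool (e = 1) = (1 :: nat)"
      using e by auto
    ultimately show ?thesis
      using True new old after_p unfolding m sum.lessThan_Suc_shift
      by (simp del: sum_of_bool_eq)
  next
    case False
    then show ?thesis using new old p by (simp del: sum_of_bool_eq)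
  qed
qed

lemma sum_insert_max_desB:
  fixes f :: "nat \<Rightarrow> 'a::comm_ring_1"
  assumes \<sigma>: "\<sigma> \<in> signed_perms n"
  shows "(\<Sum>p\<le>n. \<Sum>e\<in>{1, -1}. f (desB (Suc n) (insert_max n \<sigma> p e))) =
     (2 * of_nat (desB n \<sigma>) + 1) * f (desB n \<sigma>)
       + (2 * of_nat n - 2 * of_nat (desB n \<sigma>) + 1) * f (Suc (desB n \<sigma>))"
proof -
  define d where "d = desB n \<sigma>"
  let ?t = "\<lambda>p. of_bool (\<sigma> (Suc p) < \<sigma> p) :: nat"
  have inner: "(\<Sum>e\<in>{1, -1}. f (desB (Suc n) (insert_max n \<sigma> p e))) =
      2 * f (Suc d) + of_nat (?t p) * (2 * f d - 2 * f (Suc d))" if "p < n" for p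
    using desB_insert_max[OF \<sigma>, of p] that by (cases "?t p = 0") (simp_all add: d_def)
  have count: "(\<Sum>p<n. of_nat (?t p)) = (of_nat d :: 'a)"
    by (simp add: d_def desB_eq_sum)
  have at_n: "(\<Sum>e\<in>{1, -1}. f (desB (Suc n) (insert_max n \<sigma> n e))) = f d + f (Suc d)"
    using desB_insert_max[OF \<sigma> order_refl, of 1] desB_insert_max[OF \<sigma> order_refl, of "-1"]
    by (simp add: d_def)
  have "(\<Sum>p\<le>n. \<Sum>e\<in>{1, -1}. f (desB (Suc n) (insert_max n \<sigma> p e)))
      = (f d + f (Suc d)) + (\<Sum>p<n. \<Sum>e\<in>{1, -1}. f (desB (Suc n) (insert_max n \<sigma> p e)))"
    by (simp only: lessThan_Suc_atMost[symmetric] sum.lessThan_Suc at_n add.commute)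
  also have "(\<Sum>p<n. \<Sum>e\<in>{1, -1}. f (desB (Suc n) (insert_max n \<sigma> p e)))
      = (\<Sum>p<n. 2 * f (Suc d) + of_nat (?t p) * (2 * f d - 2 * f (Suc d)))"
    by (rule sum.cong[OF refl], rule inner) simp
  also have "(\<Sum>p<n. 2 * f (Suc d) + of_nat (?t p) * (2 * f d - 2 * f (Suc d)))
      = of_nat n * (2 * f (Suc d)) + of_nat d * (2 * f d - 2 * f (Suc d))"
    unfolding sum.distrib sum_distrib_right[symmetric] count by simp
  also have "(f d + f (Suc d)) + (of_nat n * (2 * f (Suc d)) + of_nat d * (2 * f d - 2 * f (Suc d)))
      = (2 * of_nat d + 1) * f d + (2 * of_nat n - 2 * of_nat d + 1) * f (Suc d)"
    by (simp add: algebra_simps)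
  finally show ?thesis by (simp add: d_def)
qed

lemma sum_signed_perms_Suc:
  fixes f :: "nat \<Rightarrow> 'a::comm_ring_1"
  shows "(\<Sum>\<pi>\<in>signed_perms (Suc n). f (desB (Suc n) \<pi>)) =
    (\<Sum>\<sigma>\<in>signed_perms n. (2 * of_nat (desB n \<sigma>) + 1) * f (desB n \<sigma>)
       + (2 * of_nat n - 2 * of_nat (desB n \<sigma>) + 1) * f (Suc (desB n \<sigma>)))"
proof -
  have "(\<Sum>\<pi>\<in>signed_perms (Suc n). f (desB (Suc n) \<pi>)) =
      (\<Sum>(\<sigma>, p, e)\<in>signed_perms n \<times> {..n} \<times> {1, -1}. f (desB (Suc n) (insert_max n \<sigma> p e)))"
    by (subst sum.reindex_bij_betw[OF bij_betw_insert_max, symmetric]) (simp add: case_prod_unfold)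
  also have "\<dots> = (\<Sum>\<sigma>\<in>signed_perms n. \<Sum>p\<le>n. \<Sum>e\<in>{1, -1}. f (desB (Suc n) (insert_max n \<sigma> p e)))"
    by (simp only: sum.cartesian_product)
  also have "\<dots> = (\<Sum>\<sigma>\<in>signed_perms n. (2 * of_nat (desB n \<sigma>) + 1) * f (desB n \<sigma>)
       + (2 * of_nat n - 2 * of_nat (desB n \<sigma>) + 1) * f (Suc (desB n \<sigma>)))"
    by (rule sum.cong[OF refl], rule sum_insert_max_desB)
  finally show ?thesis .
qed

definition eulerB_coeff :: "nat \<Rightarrow> nat \<Rightarrow> real" where
  "eulerB_coeff n j = (\<Sum>\<pi>\<in>signed_perms n. if desB n \<pi> = j then 1 else 0)"

lemma eulerB_coeff_0: "eulerB_coeff 0 j = of_bool (j = 0)"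
  by (simp add: eulerB_coeff_def signed_perms_0 desB_def)

lemma eulerB_coeff_eq_0: "n < j \<Longrightarrow> eulerB_coeff n j = 0"
  unfolding eulerB_coeff_def using desB_le by (intro sum.neutral) (metis leD)

lemma eulerB_coeff_Suc:
  "eulerB_coeff (Suc n) j = (2 * real j + 1) * eulerB_coeff n j
     + (if j = 0 then 0 else (2 * real n - 2 * real j + 3) * eulerB_coeff n (j - 1))"
proof -
  have "eulerB_coeff (Suc n) j = (\<Sum>\<sigma>\<in>signed_perms n.
      (2 * real (desB n \<sigma>) + 1) * (if desB n \<sigma> = j then 1 else 0)
      + (2 * real n - 2 * real (desB n \<sigma>) + 1) * (if Suc (desB n \<sigma>) = j then 1 else 0))"
    unfolding eulerB_coeff_def by (rule sum_signed_perms_Suc)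
  also have "\<dots> = (\<Sum>\<sigma>\<in>signed_perms n. (2 * real j + 1) * (if desB n \<sigma> = j then 1 else 0))
      + (\<Sum>\<sigma>\<in>signed_perms n. if j = 0 then 0
           else (2 * real n - 2 * real j + 3) * (if desB n \<sigma> = j - 1 then 1 else 0))"
    unfolding sum.distrib[symmetric] by (rule sum.cong[OF refl]) auto
  finally show ?thesis by (simp add: eulerB_coeff_def sum_distrib_left)
qed

lemma eulerB_eq_sum_coeff: "eulerB n y = (\<Sum>j\<le>n. eulerB_coeff n j * y ^ j)"
proof -
  have "(\<Sum>j\<le>n. (if desB n \<pi> = j then 1 else 0) * y ^ j) = y ^ desB n \<pi>" for \<pi>
    using desB_le[of n \<pi>] by (simp add: if_distrib[of "\<lambda>c. c * _"] sum.delta cong: if_cong)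
  then have "eulerB n y = (\<Sum>\<pi>\<in>signed_perms n. \<Sum>j\<le>n. (if desB n \<pi> = j then 1 else 0) * y ^ j)"
    by (simp add: eulerB_def)
  also have "\<dots> = (\<Sum>j\<le>n. eulerB_coeff n j * y ^ j)"
    by (subst sum.swap) (simp add: eulerB_coeff_def sum_distrib_right)
  finally show ?thesis .
qed

lemma eulerB_1_Suc: "eulerB (Suc n) 1 = (2 * real n + 2) * eulerB n 1"
  using sum_signed_perms_Suc[of "\<lambda>_. 1 :: real" n]
  by (simp add: eulerB_def sum_distrib_left algebra_simps)

lemma eulerB_coeff_symmetric: "j \<le> n \<Longrightarrow> eulerB_coeff n j = eulerB_coeff n (n - j)"
proof (induction n arbitrary: j)
  case 0
  then show ?case by simp
next
  case (Suc n)
  have top: "eulerB_coeff (Suc n) (Suc n) = eulerB_coeff n n"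
    using eulerB_coeff_Suc[of n "Suc n"] eulerB_coeff_eq_0[of n "Suc n"] by simp
  have bot: "eulerB_coeff (Suc n) 0 = eulerB_coeff n 0"
    using eulerB_coeff_Suc[of n 0] by simp
  consider "j = 0" | "j = Suc n" | "0 < j" "j \<le> n" using Suc.prems by linarith
  then show ?case
  proof cases
    case 1
    then show ?thesis using top bot Suc.IH[of n] by simp
  next
    case 2
    then show ?thesis using top bot Suc.IH[of n] by simp
  next
    case 3
    define m where "m = Suc n - j"
    have m: "m \<noteq> 0" "m - 1 = n - j" "m = n - (j - 1)" "real m = real n + 1 - real j"
      using 3 by (auto simp: m_def of_nat_diff)
    have "eulerB_coeff (Suc n) m
        = (2 * real m + 1) * eulerB_coeff n m + (2 * real n - 2 * real m + 3) * eulerB_coeff n (m - 1)"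
      using eulerB_coeff_Suc[of n m] m by simp
    also have "\<dots> = (2 * real m + 1) * eulerB_coeff n (j - 1) + (2 * real n - 2 * real m + 3) * eulerB_coeff n j"
      using Suc.IH[of j] Suc.IH[of "j - 1"] 3 m by simp
    also have "\<dots> = eulerB_coeff (Suc n) j"
      using eulerB_coeff_Suc[of n j] 3 m by (simp add: algebra_simps)
    finally show ?thesis by (simp add: m_def)
  qed
qed

lemma eulerB_palindromic:
  assumes "q \<noteq> 0"
  shows "q ^ n * eulerB n (inverse q) = eulerB n q"
proof -
  have "q ^ n * inverse q ^ j = q ^ (n - j)" if "j \<le> n" for j
    using that assms by (simp add: power_diff power_inverse field_simps)
  then have "q ^ n * eulerB n (inverse q) = (\<Sum>j\<le>n. eulerB_coeff n j * q ^ (n - j))"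
    unfolding eulerB_eq_sum_coeff sum_distrib_left by (intro sum.cong) (simp_all add: mult.left_commute)
  also have "\<dots> = (\<Sum>j\<le>n. eulerB_coeff n (n - j) * q ^ (n - (n - j)))"
    by (rule sum.reindex_bij_witness[of _ "\<lambda>j. n - j" "\<lambda>j. n - j"]) auto
  also have "\<dots> = eulerB n q"
    unfolding eulerB_eq_sum_coeff by (intro sum.cong) (simp_all add: eulerB_coeff_symmetric[symmetric])
  finally show ?thesis .
qed

unbundle fps_syntax

definition fps_eulerB :: "nat \<Rightarrow> real fps" where
  "fps_eulerB n = Abs_fps (eulerB_coeff n)"

definition fps_odd_powers :: "nat \<Rightarrow> real fps" where
  "fps_odd_powers n = Abs_fps (\<lambda>i. (2 * real i + 1) ^ n)"

lemma fps_X_X_deriv_nth_Suc: "(fps_X * (fps_X * fps_deriv f)) $ Suc m = of_nat m * f $ m"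
  by (cases m) simp_all

lemma fps_eulerB_Suc:
  "fps_eulerB (Suc n) = fps_eulerB n + fps_const (2 * real n + 1) * (fps_X * fps_eulerB n)
     + fps_const 2 * (fps_X * fps_deriv (fps_eulerB n))
     - fps_const 2 * (fps_X * (fps_X * fps_deriv (fps_eulerB n)))" (is "_ = ?R")
proof (rule fps_ext)
  fix j
  show "fps_eulerB (Suc n) $ j = ?R $ j"
  proof (cases j)
    case 0
    then show ?thesis by (simp add: fps_eulerB_def eulerB_coeff_Suc)
  next
    case (Suc m)
    have "?R $ Suc m = eulerB_coeff n (Suc m) + (2 * real n + 1) * eulerB_coeff n m
        + 2 * (real (Suc m) * eulerB_coeff n (Suc m)) - 2 * (real m * eulerB_coeff n m)"
      by (simp only: fps_add_nth fps_sub_nth fps_mult_left_const_nth fps_X_X_deriv_nth_Suc)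
        (simp add: fps_eulerB_def)
    also have "\<dots> = eulerB_coeff (Suc n) (Suc m)"
      by (simp add: eulerB_coeff_Suc algebra_simps)
    finally show ?thesis using Suc by (simp add: fps_eulerB_def)
  qed
qed

lemma fps_odd_powers_Suc:
  "fps_odd_powers (Suc n) = fps_odd_powers n + fps_const 2 * (fps_X * fps_deriv (fps_odd_powers n))"
  by (rule fps_ext) (simp add: fps_odd_powers_def algebra_simps)

lemma fps_deriv_one_minus_X_power:
  "fps_deriv ((1 - fps_X) ^ Suc n :: 'a::comm_ring_1 fps) = - (of_nat (Suc n) * (1 - fps_X) ^ n)"
  by (simp only: fps_deriv_power' diff_Suc_1 fps_deriv_sub fps_deriv_1 fps_deriv_fps_X)
    (simp add: algebra_simps)

lemma fps_eulerB_closed_form: "fps_eulerB n = (1 - fps_X) ^ Suc n * fps_odd_powers n"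
proof (induction n)
  case 0
  show ?case
    by (rule fps_ext) (simp add: fps_eulerB_def fps_odd_powers_def eulerB_coeff_0 algebra_simps)
next
  case (Suc n)
  let ?Y = "(1 - fps_X) ^ n :: real fps" and ?S = "fps_odd_powers n"
  have D: "fps_deriv (fps_eulerB n) = - (of_nat (Suc n) * ?Y) * ?S + (1 - fps_X) * ?Y * fps_deriv ?S"
    unfolding Suc.IH fps_deriv_mult fps_deriv_one_minus_X_power by simp
  have "fps_eulerB (Suc n) = (1 - fps_X) * ?Y * ?S + fps_const (2 * real n + 1) * (fps_X * ((1 - fps_X) * ?Y * ?S))
     + fps_const 2 * (fps_X * (- (of_nat (Suc n) * ?Y) * ?S + (1 - fps_X) * ?Y * fps_deriv ?S))
     - fps_const 2 * (fps_X * (fps_X * (- (of_nat (Suc n) * ?Y) * ?S + (1 - fps_X) * ?Y * fps_deriv ?S)))"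
    unfolding fps_eulerB_Suc[of n] D unfolding Suc.IH power_Suc ..
  also have "\<dots> = (1 - fps_X) * ((1 - fps_X) * ?Y) * (?S + fps_const 2 * (fps_X * fps_deriv ?S))"
  proof -
    \<comment> \<open>the coefficient \<open>2n + 1 = 2(n + 1) - 1\<close> makes the \<open>?S\<close>-terms collapse\<close>
    have "fps_const (2 * real n + 1) = fps_const 2 * of_nat (Suc n) - 1"
      by (rule fps_ext) (simp add: fps_of_nat [symmetric])
    then show ?thesis by (simp only:) (simp add: algebra_simps)
  qed
  finally show ?case by (simp add: fps_odd_powers_Suc)
qed

lemma fps_binomial_eulerB:
  "(\<Sum>l\<le>n. fps_const (of_nat (n choose l)) * (fps_eulerB (n - l) * (fps_const a * (1 - fps_X)) ^ l))
   = (1 - fps_X) ^ Suc n * Abs_fps (\<lambda>i. (a + (2 * real i + 1)) ^ n)"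
proof -
  have "fps_const (of_nat (n choose l)) * (fps_eulerB (n - l) * (fps_const a * (1 - fps_X)) ^ l)
      = (1 - fps_X) ^ Suc n * (fps_const (of_nat (n choose l) * a ^ l) * fps_odd_powers (n - l))"
    if "l \<le> n" for l
  proof -
    have split: "(1 - fps_X :: real fps) ^ Suc n = (1 - fps_X) ^ Suc (n - l) * (1 - fps_X) ^ l"
      using that by (simp flip: power_add)
    have "fps_const (of_nat (n choose l)) * (fps_eulerB (n - l) * (fps_const a * (1 - fps_X)) ^ l)
        = fps_const (of_nat (n choose l)) * (((1 - fps_X) ^ Suc (n - l) * fps_odd_powers (n - l))
            * (fps_const (a ^ l) * (1 - fps_X) ^ l))"
      by (simp only: fps_eulerB_closed_form power_mult_distrib fps_const_power)
    also have "\<dots> = ((1 - fps_X) ^ Suc (n - l) * (1 - fps_X) ^ l)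
        * (fps_const (of_nat (n choose l)) * fps_const (a ^ l) * fps_odd_powers (n - l))"
      by (simp only: ac_simps)
    finally show ?thesis
      by (simp only: split fps_const_mult)
  qed
  then have "(\<Sum>l\<le>n. fps_const (of_nat (n choose l)) * (fps_eulerB (n - l) * (fps_const a * (1 - fps_X)) ^ l))
      = (1 - fps_X) ^ Suc n * (\<Sum>l\<le>n. fps_const (of_nat (n choose l) * a ^ l) * fps_odd_powers (n - l))"
    by (simp add: sum_distrib_left)
  also have "(\<Sum>l\<le>n. fps_const (of_nat (n choose l) * a ^ l) * fps_odd_powers (n - l))
      = Abs_fps (\<lambda>i. (a + (2 * real i + 1)) ^ n)"
    by (rule fps_ext) (simp add: fps_sum_nth fps_odd_powers_def binomial_ring)
  finally show ?thesis .
qed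

lemma fps_binomial_eulerB_reflect:
  assumes "n \<noteq> 0"
  shows "(\<Sum>l\<le>n. fps_const (of_nat (n choose l)) * (fps_eulerB (n - l) * (fps_const (-1) * (1 - fps_X)) ^ l))
    = fps_X * (\<Sum>l\<le>n. fps_const (of_nat (n choose l)) * (fps_eulerB (n - l) * (fps_const 1 * (1 - fps_X)) ^ l))"
proof -
  \<comment> \<open>\<open>(2i)^n\<close> vanishes at \<open>i = 0\<close> and equals \<open>(2(i - 1) + 2)^n\<close> otherwise\<close>
  have "Abs_fps (\<lambda>i. (- 1 + (2 * real i + 1)) ^ n) = fps_X * Abs_fps (\<lambda>i. (1 + (2 * real i + 1)) ^ n)"
    using assms by (intro fps_ext) (simp add: fps_X_mult_nth of_nat_diff algebra_simps)
  then show ?thesis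
    unfolding fps_binomial_eulerB by (simp only: mult.left_commute)
qed

definition eulerB_poly :: "nat \<Rightarrow> real poly" where
  "eulerB_poly n = (\<Sum>j\<le>n. monom (eulerB_coeff n j) j)"

lemma poly_eulerB_poly: "poly (eulerB_poly n) y = eulerB n y"
  by (simp add: eulerB_poly_def poly_sum poly_monom eulerB_eq_sum_coeff)

lemma fps_of_poly_eulerB_poly: "fps_of_poly (eulerB_poly n) = fps_eulerB n"
proof (rule fps_ext)
  fix k
  have "coeff (eulerB_poly n) k = eulerB_coeff n k"
    using eulerB_coeff_eq_0[of n k] by (simp add: eulerB_poly_def coeff_sum sum.delta')
  then show "fps_of_poly (eulerB_poly n) $ k = fps_eulerB n $ k"
    by (simp add: fps_eulerB_def)
qed

lemma sum_binomial_eulerB_reflect: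
  assumes "n \<noteq> 0"
  shows "(\<Sum>l\<le>n. of_nat (n choose l) * (eulerB (n - l) q * (q - 1) ^ l))
    = q * (\<Sum>l\<le>n. of_nat (n choose l) * (eulerB (n - l) q * (1 - q) ^ l))"
proof -
  define P where "P a = (\<Sum>l\<le>n. smult (of_nat (n choose l)) (eulerB_poly (n - l) * (smult a [:1, -1:]) ^ l))"
    for a
  have one_minus_X: "fps_of_poly [:1, -1:] = (1 - fps_X :: real fps)"
    by (rule fps_ext) (simp add: coeff_pCons split: nat.split)
  have "fps_of_poly (P (-1)) = fps_of_poly ([:0, 1:] * P 1)"
    unfolding P_def
    by (simp only: fps_of_poly_sum fps_of_poly_smult fps_of_poly_mult fps_of_poly_power
        fps_of_poly_eulerB_poly one_minus_X fps_of_poly_fps_X fps_binomial_eulerB_reflect[OF assms])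
  then have "poly (P (-1)) q = poly ([:0, 1:] * P 1) q"
    by (simp only: fps_of_poly_eq_iff)
  then show ?thesis
    by (simp add: P_def poly_sum poly_eulerB_poly)
qed

lemma sum_binomial_Suc:
  fixes f :: "nat \<Rightarrow> 'a::comm_semiring_1"
  shows "(\<Sum>l\<le>Suc s. of_nat (Suc s choose l) * f l)
    = (\<Sum>l\<le>s. of_nat (s choose l) * f (Suc l)) + (\<Sum>l\<le>s. of_nat (s choose l) * f l)"
proof -
  have "(\<Sum>l\<le>Suc s. of_nat (Suc s choose l) * f l)
      = f 0 + ((\<Sum>l\<le>s. of_nat (s choose l) * f (Suc l)) + (\<Sum>l\<le>s. of_nat (s choose Suc l) * f (Suc l)))"
    by (simp only: sum.atMost_Suc_shift binomial_Suc_Suc of_nat_add distrib_right sum.distrib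
        binomial_n_0 of_nat_1 mult_1_left)
  also have "\<dots> = (\<Sum>l\<le>s. of_nat (s choose l) * f (Suc l))
      + (f 0 + (\<Sum>l\<le>s. of_nat (s choose Suc l) * f (Suc l)))"
    by (rule add.left_commute)
  also have "f 0 + (\<Sum>l\<le>s. of_nat (s choose Suc l) * f (Suc l)) = (\<Sum>l\<le>Suc s. of_nat (s choose l) * f l)"
    by (simp only: sum.atMost_Suc_shift binomial_n_0 of_nat_1 mult_1_left)
  also have "\<dots> = (\<Sum>l\<le>s. of_nat (s choose l) * f l)"
    by (simp add: binomial_eq_0)
  finally show ?thesis .
qed

lemma sum_binomial_triangle:
  fixes A b :: "nat \<Rightarrow> 'a::comm_semiring_1"
  shows "(\<Sum>l=0..k. A l * (\<Sum>s=l..k. of_nat (s choose l) * b s))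
    = (\<Sum>s\<le>k. b s * (\<Sum>l\<le>s. of_nat (s choose l) * A l))"
proof -
  have "(\<Sum>s=l..k. of_nat (s choose l) * b s) = (\<Sum>s\<le>k. of_nat (s choose l) * b s)" for l
    by (rule sum.mono_neutral_left) (auto simp: binomial_eq_0)
  moreover have "(\<Sum>l\<le>k. A l * (of_nat (s choose l) * b s)) = b s * (\<Sum>l\<le>s. of_nat (s choose l) * A l)"
    if "s \<le> k" for s
  proof -
    have "(\<Sum>l\<le>k. A l * (of_nat (s choose l) * b s)) = (\<Sum>l\<le>s. A l * (of_nat (s choose l) * b s))"
      by (rule sum.mono_neutral_right) (use that in \<open>auto simp: binomial_eq_0\<close>)
    then show ?thesis by (simp add: sum_distrib_left mult_ac)
  qed
  ultimately show ?thesis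
    by (simp add: atLeast0AtMost sum_distrib_left sum.swap [of _ "{..k}"])
qed

lemma one_minus_mult_power_sum:
  fixes f :: "nat \<Rightarrow> 'a::comm_ring_1"
  shows "(1 - x) * (\<Sum>s\<le>Suc k. x ^ s * f s)
    = f 0 + (\<Sum>s\<le>k. x ^ Suc s * (f (Suc s) - f s)) - x ^ Suc (Suc k) * f (Suc k)"
proof -
  have "x * (\<Sum>s\<le>Suc k. x ^ s * f s) = (\<Sum>s\<le>k. x ^ Suc s * f s) + x ^ Suc (Suc k) * f (Suc k)"
    unfolding sum_distrib_left by (simp add: mult.assoc)
  moreover have "(\<Sum>s\<le>Suc k. x ^ s * f s) = f 0 + (\<Sum>s\<le>k. x ^ Suc s * f (Suc s))"
    by (simp only: sum.atMost_Suc_shift) simp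
  ultimately show ?thesis
    by (simp add: left_diff_distrib sum_subtractf right_diff_distrib)
qed

definition binom_eulerB :: "nat \<Rightarrow> nat \<Rightarrow> real \<Rightarrow> real" where
  "binom_eulerB n s q = (\<Sum>l\<le>s. of_nat (s choose l) * (eulerB (n - l) q * (q - 1) ^ l))"

lemma binom_eulerB_0: "binom_eulerB n 0 q = eulerB n q"
  by (simp add: binom_eulerB_def)

lemma binom_eulerB_at_1: "binom_eulerB n s 1 = eulerB n 1"
  by (simp add: binom_eulerB_def zero_power sum.atMost_shift)

lemma binom_eulerB_Suc:
  "binom_eulerB (Suc n) (Suc s) q = binom_eulerB (Suc n) s q + (q - 1) * binom_eulerB n s q"
  unfolding binom_eulerB_def sum_binomial_Suc
  by (simp add: sum_distrib_left algebra_simps)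

lemma binom_eulerB_palindromic:
  assumes n: "n \<noteq> 0" and q: "q \<noteq> 0"
  shows "q ^ Suc n * binom_eulerB n n (inverse q) = binom_eulerB n n q"
proof -
  have "q ^ Suc n * binom_eulerB n n (inverse q)
      = q * (\<Sum>l\<le>n. of_nat (n choose l) * (eulerB (n - l) q * (1 - q) ^ l))"
    unfolding binom_eulerB_def sum_distrib_left
  proof (rule sum.cong[OF refl])
    fix l assume "l \<in> {..n}"
    then have "q ^ Suc n = q * q ^ (n - l) * q ^ l"
      by (simp flip: power_add)
    moreover have "eulerB (n - l) (inverse q) = eulerB (n - l) q / q ^ (n - l)"
      using eulerB_palindromic[OF q, of "n - l"] q by (simp add: field_simps)
    moreover have "inverse q - 1 = (1 - q) / q"
      using q by (simp add: field_simps)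
    ultimately show "q ^ Suc n * (of_nat (n choose l) * (eulerB (n - l) (inverse q) * (inverse q - 1) ^ l))
        = q * (of_nat (n choose l) * (eulerB (n - l) q * (1 - q) ^ l))"
      using q by (simp add: field_simps)
  qed
  also have "\<dots> = binom_eulerB n n q"
    unfolding binom_eulerB_def sum_binomial_eulerB_reflect[OF n] ..
  finally show ?thesis .
qed

definition binom_eulerB_sum :: "nat \<Rightarrow> real \<Rightarrow> real \<Rightarrow> real" where
  "binom_eulerB_sum n x q = (\<Sum>s\<le>n. x ^ s * binom_eulerB n s q)"

lemma binom_eulerB_sum_Suc:
  "(1 - x) * binom_eulerB_sum (Suc n) x q
    = eulerB (Suc n) q + (q - 1) * x * binom_eulerB_sum n x q - x ^ (n + 2) * binom_eulerB (Suc n) (Suc n) q"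
  unfolding binom_eulerB_sum_def one_minus_mult_power_sum
  by (simp add: binom_eulerB_0 binom_eulerB_Suc sum_distrib_left algebra_simps)

lemma triangle_sum_descending_powers:
  fixes x :: real
  assumes "x \<noteq> 0" "k \<le> m"
  shows "(\<Sum>l=0..k. eulerB (k - l) q * (q - 1) ^ l * (\<Sum>s=l..k. of_nat (s choose l) * x ^ (m - s)))
    = x ^ m * binom_eulerB_sum k (inverse x) q"
proof -
  have "x ^ (m - s) = x ^ m * inverse x ^ s" if "s \<le> k" for s
    using that assms by (simp add: power_diff power_inverse field_simps)
  then show ?thesis
    unfolding sum_binomial_triangle
    unfolding binom_eulerB_def [symmetric] binom_eulerB_sum_def sum_distrib_left
    by (intro sum.cong) (simp_all add: mult.assoc)
qed

lemma triangle_sum_ascending_powers: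
  fixes x :: real
  shows "(\<Sum>l=0..k. eulerB (k - l) q * (q - 1) ^ l * (\<Sum>s=l..k. of_nat (s choose l) * x ^ (c + s)))
    = x ^ c * binom_eulerB_sum k x q"
  unfolding sum_binomial_triangle
  unfolding binom_eulerB_def [symmetric] binom_eulerB_sum_def sum_distrib_left
  by (intro sum.cong) (simp_all add: power_add mult.assoc)

lemma Hk_eq:
  assumes "x \<noteq> 0"
  shows "Hk n x = x ^ (2*n+1) * binom_eulerB_sum n (inverse x) (x ^ (2*n+2))
    + (x ^ (2*n+2)) ^ (n+1) * binom_eulerB_sum n x (inverse (x ^ (2*n+2)))"
proof -
  have "x ^ (2*(n+1)^2) = (x ^ (2*n+2)) ^ (n+1)"
    unfolding power_mult [symmetric]
    by (rule arg_cong [where f = "power x"]) (simp add: power2_eq_square algebra_simps)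
  moreover have "n \<le> 2*n+1" by simp
  note triangle_sum_descending_powers[OF assms this]
  ultimately show ?thesis
    by (simp only: Hk_def triangle_sum_ascending_powers)
qed

lemma Gk_eq:
  assumes "x \<noteq> 0"
  shows "Gk k x = x ^ (2*k+2) * binom_eulerB_sum k (inverse x) (x ^ (2*k+4))
    + (x ^ (2*k+4)) ^ (k+1) * binom_eulerB_sum k x (inverse (x ^ (2*k+4)))"
proof -
  have "1 / x * (x ^ (2*k+3) * L) = x ^ (2*k+2) * L" for L
    using assms by (simp add: eval_nat_numeral)
  moreover have "x ^ (2*(k+1)*(k+2)) = (x ^ (2*k+4)) ^ (k+1)"
    unfolding power_mult [symmetric] by (rule arg_cong [where f = "power x"]) (simp add: algebra_simps)
  moreover have "k \<le> 2*k+3" by simp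
  note triangle_sum_descending_powers[OF assms this]
  ultimately show ?thesis
    by (simp only: Gk_def triangle_sum_ascending_powers)
qed

lemma binom_eulerB_sum_pair_Suc:
  fixes x :: real and k :: nat
  assumes x: "x \<noteq> 0"
  defines "q \<equiv> x ^ (2*k+4)"
  shows "(1 - x) * (x ^ (2*k+3) * binom_eulerB_sum (Suc k) (inverse x) q
                   + q ^ (k+2) * binom_eulerB_sum (Suc k) x (inverse q))
    = x * (1 - q) * (x ^ (2*k+2) * binom_eulerB_sum k (inverse x) q
                     + q ^ (k+1) * binom_eulerB_sum k x (inverse q))"
proof -
  let ?y = "inverse x" and ?Q = "inverse q"
  let ?L = binom_eulerB_sum and ?E = "binom_eulerB (Suc k) (Suc k)"
  have q: "q \<noteq> 0" using x by (simp add: q_def)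
  have "2*k+4 = Suc (2*k+3)" "2*k+4 = (k+2) + (k+2)" "2*k+3 = Suc (2*k+2)" by simp_all
  then have q_Suc: "q = x ^ (2*k+3) * x" "q = x ^ (k+2) * x ^ (k+2)"
    and x_Suc: "x ^ (2*k+3) = x * x ^ (2*k+2)"
    unfolding q_def by (metis power_Suc2, metis power_add, metis power_Suc)
  have qy: "q * ?y = x ^ (2*k+3)"
    unfolding q_Suc(1) using x by simp
  have "x ^ (k+2) * ?y ^ (k+2) = 1"
    using x by (metis power_mult_distrib right_inverse power_one)
  then have qy_pow: "q * ?y ^ (k+2) = x ^ (k+2)"
    unfolding q_Suc(2) by (simp only: mult.assoc mult_1_right)
  have qQ: "q ^ (k+2) * ?Q - q ^ (k+2) = q ^ (k+1) * (1 - q)"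
    using q by (simp add: algebra_simps)
  have scale: "x ^ (2*k+3) - x ^ (2*k+3) * x = q * ?y - q"
    using qy q_Suc(1) by linarith
  have "(1 - x) * (x ^ (2*k+3) * ?L (Suc k) ?y q + q ^ (k+2) * ?L (Suc k) x ?Q)
      = (x ^ (2*k+3) - x ^ (2*k+3) * x) * ?L (Suc k) ?y q + q ^ (k+2) * ((1 - x) * ?L (Suc k) x ?Q)"
    by (simp add: algebra_simps)
  also have "\<dots> = - q * ((1 - ?y) * ?L (Suc k) ?y q) + q ^ (k+2) * ((1 - x) * ?L (Suc k) x ?Q)"
    unfolding scale by (simp add: algebra_simps)
  also have "\<dots> = - q * (eulerB (Suc k) q + (q - 1) * ?y * ?L k ?y q - ?y ^ (k+2) * ?E q)
      + q ^ (k+2) * (eulerB (Suc k) ?Q + (?Q - 1) * x * ?L k x ?Q - x ^ (k+2) * ?E ?Q)"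
    by (simp only: binom_eulerB_sum_Suc add_2_eq_Suc')
  also have "\<dots> = (1 - q) * (q * ?y) * ?L k ?y q + (q ^ (k+2) * ?Q - q ^ (k+2)) * x * ?L k x ?Q
      + (q * ?y ^ (k+2) * ?E q - x ^ (k+2) * (q ^ Suc (Suc k) * ?E ?Q))
      + (q * (q ^ Suc k * eulerB (Suc k) ?Q) - q * eulerB (Suc k) q)"
    by (simp add: algebra_simps)
  also have "\<dots> = x * (1 - q) * (x ^ (2*k+2) * ?L k ?y q + q ^ (k+1) * ?L k x ?Q)"
    unfolding qy qy_pow qQ x_Suc eulerB_palindromic[OF q]
      binom_eulerB_palindromic[OF Suc_not_Zero q]
    by (simp add: algebra_simps)
  finally show ?thesis .
qed

lemma Hk_Suc_mult_one_minus:
  fixes x :: real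
  assumes "x \<noteq> 0"
  shows "(1 - x) * Hk (Suc k) x = x * (1 - x ^ (2*k+4)) * Gk k x"
proof -
  have "2 * Suc k + 1 = 2*k+3" "2 * Suc k + 2 = 2*k+4" "Suc k + 1 = k+2" by simp_all
  then show ?thesis
    using Hk_eq[OF assms, of "Suc k"] Gk_eq[OF assms, of k] binom_eulerB_sum_pair_Suc[OF assms, of k]
    by (simp only:)
qed

lemma Hk_Suc_at_1: "Hk (Suc k) 1 = Gk k 1 * (2 * k + 4)"
proof -
  have L: "binom_eulerB_sum n 1 1 = (n + 1) * eulerB n 1" for n
    by (simp add: binom_eulerB_sum_def binom_eulerB_at_1)
  show ?thesis
    using Hk_eq[of 1 "Suc k"] Gk_eq[of 1 k] by (simp add: L eulerB_1_Suc algebra_simps)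
qed

theorem lemma3p5:
  fixes k :: nat and x :: real
  assumes "x \<noteq> 0"
  shows "Hk (Suc k) x = Gk k x * (\<Sum>j=1..2*k+4. x ^ j)"
proof (cases "x = 1")
  case True
  then show ?thesis using Hk_Suc_at_1 by simp
next
  case False
  have "(1 - x) * (\<Sum>j=1..2*k+4. x ^ j) = x - x ^ Suc (2*k+4)"
    using False by (simp add: sum_gp)
  also have "\<dots> = x * (1 - x ^ (2*k+4))"
    by (simp only: power_Suc) (simp add: algebra_simps)
  finally have geometric: "(1 - x) * (\<Sum>j=1..2*k+4. x ^ j) = x * (1 - x ^ (2*k+4))" .
  have "(1 - x) * Hk (Suc k) x = (1 - x) * (Gk k x * (\<Sum>j=1..2*k+4. x ^ j))"
    unfolding Hk_Suc_mult_one_minus[OF assms] mult.left_commute[of "1 - x"] geometric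
    by (simp add: algebra_simps)
  then show ?thesis using False by simp
qed

end
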